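(* Suppose $-A_{22}$ is m-dissipative in $\mathcal H^-$ and $G(\mu)=A_{12}(A_{22}-\mu)^{-1}$ is compact for some (equivalently all) $\mu\in\mathbb C^-$. Then for every $\gamma\in[0,\pi/2)$, $\|G(\mu)\|\to0$ as $|\mu|\to\infty$, uniformly in the sector $\{\mu\ne0:\ |\arg\mu-\pi|\le\gamma\}$.
   Context: $\mathcal H=\mathcal H^+\oplus\mathcal H^-$ is an orthogonal decomposition of a separable Hilbert space. $A_{22}$ is a linear operator in $\mathcal H^-$ with domain $\mathcal D^-$, and $A_{12}:\mathcal D^-\to\mathcal H^+$ is linear; for $\mu\in\rho(A_{22})$, $G(\mu)=A_{12}(A_{22}-\mu)^{-1}$, defined on all of $\mathcal H^-$. An operator $T$ is dissipative if $\operatorname{Re}(Tx,x)\le0$ on $\mathcal D(T)$, and m-dissipative if it is dissipative with $T-\lambda$ boundedly invertible for all $\operatorname{Re}\lambda>0$. $\mathbb C^-=\{\operatorname{Re}\mu<0\}$. *)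

theory Defs
  imports "HOL-Analysis.Analysis"
begin

class complex_normed_vector = real_normed_vector +
  fixes scaleC :: "complex \<Rightarrow> 'a \<Rightarrow> 'a"  (infixr \<open>*\<^sub>C\<close> 75)
  assumes scaleC_add_right: "a *\<^sub>C (x + y) = a *\<^sub>C x + a *\<^sub>C y"
    and scaleC_add_left: "(a + b) *\<^sub>C x = a *\<^sub>C x + b *\<^sub>C x"
    and scaleC_scaleC: "a *\<^sub>C (b *\<^sub>C x) = (a * b) *\<^sub>C x"
    and scaleC_one: "1 *\<^sub>C x = x"
    and scaleC_of_real: "complex_of_real r *\<^sub>C x = r *\<^sub>R x"
    and norm_scaleC: "norm (a *\<^sub>C x) = cmod a * norm x"

class complex_inner = complex_normed_vector +
  fixes cinner :: "'a \<Rightarrow> 'a \<Rightarrow> complex"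
  assumes cinner_commute: "cinner x y = cnj (cinner y x)"
    and cinner_add_left: "cinner (x + y) z = cinner x z + cinner y z"
    and cinner_scaleC_left: "cinner (a *\<^sub>C x) y = a * cinner x y"
    and norm_eq_sqrt_cinner: "norm x = sqrt (Re (cinner x x))"

text \<open>A complex Hilbert space is a complete complex inner product space;
  separability is stated explicitly where needed.\<close>

definition separable_space :: "'a::topological_space itself \<Rightarrow> bool" where
  "separable_space _ \<longleftrightarrow> (\<exists>S::'a set. countable S \<and> closure S = UNIV)"

definition csubspace :: "'a::complex_normed_vector set \<Rightarrow> bool" where
  "csubspace D \<longleftrightarrow> 0 \<in> D \<and> (\<forall>x\<in>D. \<forall>y\<in>D. x + y \<in> D) \<and> (\<forall>c. \<forall>x\<in>D. c *\<^sub>C x \<in> D)"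

definition clinear_on :: "'a::complex_normed_vector set \<Rightarrow> ('a \<Rightarrow> 'b::complex_normed_vector) \<Rightarrow> bool" where
  "clinear_on D T \<longleftrightarrow> csubspace D \<and>
     (\<forall>x\<in>D. \<forall>y\<in>D. T (x + y) = T x + T y) \<and> (\<forall>c. \<forall>x\<in>D. T (c *\<^sub>C x) = c *\<^sub>C T x)"

definition boundedly_invertible :: "'a::complex_normed_vector set \<Rightarrow> ('a \<Rightarrow> 'a) \<Rightarrow> complex \<Rightarrow> bool" where
  "boundedly_invertible D T l \<longleftrightarrow>
     bij_betw (\<lambda>x. T x - l *\<^sub>C x) D UNIV \<and>
     (\<exists>C. \<forall>x\<in>D. norm x \<le> C * norm (T x - l *\<^sub>C x))"

definition resolvent_set :: "'a::complex_normed_vector set \<Rightarrow> ('a \<Rightarrow> 'a) \<Rightarrow> complex set" where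
  "resolvent_set D T = {\<mu>. boundedly_invertible D T \<mu>}"

text \<open>The resolvent \<open>(T - \<mu>)\<^sup>-\<^sup>1\<close>, defined on the whole space for \<open>\<mu>\<close> in the resolvent set.\<close>
definition resolvent :: "'a::complex_normed_vector set \<Rightarrow> ('a \<Rightarrow> 'a) \<Rightarrow> complex \<Rightarrow> 'a \<Rightarrow> 'a" where
  "resolvent D T \<mu> y = (THE x. x \<in> D \<and> T x - \<mu> *\<^sub>C x = y)"

definition dissipative :: "'a::complex_inner set \<Rightarrow> ('a \<Rightarrow> 'a) \<Rightarrow> bool" where
  "dissipative D T \<longleftrightarrow> (\<forall>x\<in>D. Re (cinner (T x) x) \<le> 0)"

definition m_dissipative :: "'a::complex_inner set \<Rightarrow> ('a \<Rightarrow> 'a) \<Rightarrow> bool" where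
  "m_dissipative D T \<longleftrightarrow> clinear_on D T \<and> dissipative D T \<and>
     (\<forall>l. Re l > 0 \<longrightarrow> boundedly_invertible D T l)"

definition compact_operator :: "('a::real_normed_vector \<Rightarrow> 'b::real_normed_vector) \<Rightarrow> bool" where
  "compact_operator G \<longleftrightarrow> (\<forall>S. bounded S \<longrightarrow> compact (closure (G ` S)))"

definition Gop :: "'b::complex_normed_vector set \<Rightarrow> ('b \<Rightarrow> 'b) \<Rightarrow> ('b \<Rightarrow> 'a) \<Rightarrow> complex \<Rightarrow> 'b \<Rightarrow> 'a" where
  "Gop D A22 A12 \<mu> = (\<lambda>y. A12 (resolvent D A22 \<mu> y))"

end

(* By the resolvent identity, G(mu) = G(mu0) (I + (mu - mu0) (A22 - mu)^-1) for a fixed mu0 with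
   G(mu0) compact, and (A22 - mu0)^-1 (I + (mu - mu0) (A22 - mu)^-1) = (A22 - mu)^-1.  Accretivity of
   A22 gives |(A22 - mu)^-1| <= 1 / (-Re mu) <= 1 / (|mu| cos gamma) in the sector, so the second
   factor stays bounded while its image under (A22 - mu0)^-1 tends to zero in norm.  As (A22 - mu0)^-1
   is injective, its adjoint has dense range, hence bounded sequences with this property converge
   weakly to zero, and the compact operator G(mu0) maps them to sequences converging to zero in norm.
   Uniformity on the sector follows by contradiction, choosing bad mu_n and unit vectors x_n. *)

theory Submission
  imports Defs
begin

section \<open>Complex inner product spaces\<close>

lemma scaleC_zero_left [simp]: "(0::complex) *\<^sub>C x = 0"
  using scaleC_of_real[of 0 x] by simp

lemma scaleC_zero_right [simp]: "a *\<^sub>C (0::'a::complex_normed_vector) = 0"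
  using scaleC_add_right[of a "0::'a" 0] by simp

lemma scaleC_minus_left: "(- a) *\<^sub>C x = - (a *\<^sub>C x)"
  using scaleC_add_left[of a "- a" x] by (simp add: eq_neg_iff_add_eq_0 add.commute)

lemma scaleC_minus_right: "a *\<^sub>C (- x) = - (a *\<^sub>C x)"
  using scaleC_add_right[of a x "- x"] by (simp add: eq_neg_iff_add_eq_0 add.commute)

lemma scaleC_diff_left: "(a - b) *\<^sub>C x = a *\<^sub>C x - b *\<^sub>C x"
  using scaleC_add_left[of a "- b" x] by (simp add: scaleC_minus_left)

lemma scaleC_diff_right: "a *\<^sub>C (x - y) = a *\<^sub>C x - a *\<^sub>C y"
  using scaleC_add_right[of a x "- y"] by (simp add: scaleC_minus_right)

lemma cinner_zero_left [simp]: "cinner 0 y = 0"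
  using cinner_scaleC_left[of 0 0 y] by simp

lemma cinner_minus_left: "cinner (- x) y = - cinner x y"
  using cinner_add_left[of x "- x" y] by (simp add: eq_neg_iff_add_eq_0 add.commute)

lemma cinner_diff_left: "cinner (x - y) z = cinner x z - cinner y z"
  using cinner_add_left[of x "- y" z] by (simp add: cinner_minus_left)

lemma cinner_add_right: "cinner x (y + z) = cinner x y + cinner x z"
  by (metis cinner_commute cinner_add_left complex_cnj_add)

lemma cinner_scaleC_right: "cinner x (a *\<^sub>C y) = cnj a * cinner x y"
  by (metis cinner_commute cinner_scaleC_left complex_cnj_mult)

lemma cinner_zero_right [simp]: "cinner x 0 = 0"
  by (metis cinner_commute cinner_zero_left complex_cnj_zero)

lemma cinner_diff_right: "cinner x (y - z) = cinner x y - cinner x z"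
  by (metis cinner_commute cinner_diff_left complex_cnj_diff)

lemma cinner_self: "cinner x x = complex_of_real ((norm x)\<^sup>2)"
proof -
  have "0 \<le> Re (cinner x x)"
    by (metis norm_eq_sqrt_cinner norm_ge_zero real_sqrt_ge_0_iff)
  moreover have "Im (cinner x x) = 0"
    using cinner_commute[of x x] by (metis complex_cnj_cancel_iff Reals_cnj_iff complex_is_Real_iff)
  ultimately show ?thesis
    by (simp add: complex_eq_iff norm_eq_sqrt_cinner)
qed

lemma cinner_self_eq_0 [simp]: "cinner x x = 0 \<longleftrightarrow> x = 0"
  by (simp add: cinner_self)

lemma norm_diff_sq: "(norm (x - y))\<^sup>2 = (norm x)\<^sup>2 - 2 * Re (cinner x y) + (norm y)\<^sup>2"
proof -
  have "cinner (x - y) (x - y) = cinner x x - cinner x y - cnj (cinner x y) + cinner y y"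
    by (simp add: cinner_diff_left cinner_diff_right) (metis cinner_commute)
  then have "Re (cinner (x - y) (x - y)) = Re (cinner x x) - 2 * Re (cinner x y) + Re (cinner y y)"
    by simp
  then show ?thesis
    by (simp add: cinner_self)
qed

lemma parallelogram_law:
  "(norm (x + y))\<^sup>2 + (norm (x - y))\<^sup>2 = 2 * (norm x)\<^sup>2 + 2 * (norm (y::'a::complex_inner))\<^sup>2"
  using norm_diff_sq[of x y] norm_diff_sq[of x "- y"] cinner_diff_right[of x 0 y] by simp

lemma norm_diff_projection_sq:
  assumes "w \<noteq> 0"
  shows "(norm (z - (cinner z w / complex_of_real ((norm w)\<^sup>2)) *\<^sub>C w))\<^sup>2
           = (norm z)\<^sup>2 - (cmod (cinner z w))\<^sup>2 / (norm w)\<^sup>2"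
proof -
  define c where "c = cinner z w"
  define n where "n = (norm w)\<^sup>2"
  have n: "n > 0" using assms by (simp add: n_def)
  have "cnj (c / complex_of_real n) * c = complex_of_real ((cmod c)\<^sup>2 / n)"
    by (simp add: mult.commute[of "cnj c"] complex_norm_square[symmetric])
  moreover have "(cmod (c / complex_of_real n))\<^sup>2 * n = (cmod c)\<^sup>2 / n"
    using n by (simp add: norm_divide power_divide power2_eq_square)
  ultimately show ?thesis
    by (simp add: norm_diff_sq cinner_scaleC_right norm_scaleC power_mult_distrib
        c_def[symmetric] n_def[symmetric] del: complex_cnj_divide)
qed

lemma cmod_cinner_le: "cmod (cinner x y) \<le> norm x * norm y"
proof (cases "y = 0")
  case False
  then have "(cmod (cinner x y))\<^sup>2 / (norm y)\<^sup>2 \<le> (norm x)\<^sup>2"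
    using norm_diff_projection_sq[of y x] by (metis diff_ge_0_iff_ge zero_le_power2)
  then have "(cmod (cinner x y))\<^sup>2 \<le> (norm x * norm y)\<^sup>2"
    using False by (simp add: divide_le_eq power_mult_distrib)
  then show ?thesis
    by (meson mult_nonneg_nonneg norm_ge_zero power2_le_imp_le)
qed simp

section \<open>Best approximation and the Riesz representation\<close>

text \<open>The parallelogram law for \<open>p - u\<close> and \<open>p - v\<close>; the midpoint of \<open>u\<close> and \<open>v\<close> lies in \<open>N\<close>.\<close>
lemma norm_diff_sq_le_infdist:
  fixes N :: "'a::complex_inner set"
  assumes N: "csubspace N" and "u \<in> N" "v \<in> N"
  shows "(norm (u - v))\<^sup>2 \<le> 2 * (dist p u)\<^sup>2 + 2 * (dist p v)\<^sup>2 - 4 * (infdist p N)\<^sup>2"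
proof -
  define m where "m = (1/2) *\<^sub>R (u + v)"
  have "m \<in> N"
    using N assms unfolding m_def csubspace_def by (metis scaleC_of_real)
  then have "infdist p N \<le> dist p m"
    by (rule infdist_le)
  moreover have "(p - u) + (p - v) = 2 *\<^sub>R (p - m)"
    by (simp add: m_def scaleR_2 algebra_simps)
  then have "norm ((p - u) + (p - v)) = 2 * dist p m"
    by (simp add: dist_norm)
  ultimately have "4 * (infdist p N)\<^sup>2 \<le> (norm ((p - u) + (p - v)))\<^sup>2"
    by (simp add: power_mult_distrib power_mono infdist_nonneg)
  then show ?thesis
    using parallelogram_law[of "p - u" "p - v"] by (simp add: dist_norm norm_minus_commute)
qed

lemma closed_csubspace_attains_infdist:
  fixes N :: "'a::{complex_inner, complete_space} set"
  assumes "closed N" and N: "csubspace N"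
  obtains q where "q \<in> N" and "dist p q = infdist p N"
proof -
  define d where "d = infdist p N"
  have "N \<noteq> {}"
    using N by (auto simp: csubspace_def)
  have "(INF a\<in>N. dist p a) < d + 1 / (real k + 1)" for k
    using infdist_notempty[OF \<open>N \<noteq> {}\<close>] by (simp add: d_def)
  then have "\<exists>a\<in>N. dist p a < d + 1 / (real k + 1)" for k
    using cINF_less_iff[OF \<open>N \<noteq> {}\<close> bdd_below_image_dist] by blast
  then obtain a where a: "\<And>k. a k \<in> N" and a_close: "\<And>k. dist p (a k) < d + 1 / (real k + 1)"
    by metis
  have dist_a: "(\<lambda>k. dist p (a k)) \<longlonglongrightarrow> d"
  proof (rule real_tendsto_sandwich)
    show "\<forall>\<^sub>F k in sequentially. d \<le> dist p (a k)"
      using a by (simp add: d_def infdist_le)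
    show "\<forall>\<^sub>F k in sequentially. dist p (a k) \<le> d + 1 / (real k + 1)"
      using a_close by (simp add: less_imp_le)
    show "(\<lambda>k. d + 1 / (real k + 1)) \<longlonglongrightarrow> d"
      using LIMSEQ_inverse_real_of_nat_add[of d] by (simp add: inverse_eq_divide add.commute)
  qed simp
  define f where "f k = 2 * (dist p (a k))\<^sup>2 - 2 * d\<^sup>2" for k
  have "f \<longlonglongrightarrow> 2 * d\<^sup>2 - 2 * d\<^sup>2"
    unfolding f_def by (intro tendsto_intros dist_a)
  then have f: "f \<longlonglongrightarrow> 0"
    by simp
  have "Cauchy a"
  proof (rule metric_CauchyI)
    fix e :: real
    assume "0 < e"
    then obtain M where "\<forall>k\<ge>M. norm (f k) < e\<^sup>2 / 2"
      using f[unfolded LIMSEQ_iff, rule_format, of "e\<^sup>2 / 2"] by auto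
    then have M: "\<And>k. k \<ge> M \<Longrightarrow> f k < e\<^sup>2 / 2"
      by auto
    have "dist (a m) (a n) < e" if "m \<ge> M" "n \<ge> M" for m n
    proof -
      have "(dist (a m) (a n))\<^sup>2 \<le> f m + f n"
        using norm_diff_sq_le_infdist[OF N a a, of m n p] by (simp add: f_def d_def dist_norm)
      also have "\<dots> < e\<^sup>2"
        using M[of m] M[of n] that by linarith
      finally show ?thesis
        using \<open>0 < e\<close> by (simp add: power_less_imp_less_base)
    qed
    then show "\<exists>M. \<forall>m\<ge>M. \<forall>n\<ge>M. dist (a m) (a n) < e"
      by blast
  qed
  then obtain q where q: "a \<longlonglongrightarrow> q"
    using Cauchy_convergent convergent_def by blast
  show thesis
  proof
    show "q \<in> N"
      using closed_sequentially[OF \<open>closed N\<close>] a q by blast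
    show "dist p q = infdist p N"
      using LIMSEQ_unique[OF tendsto_dist[OF tendsto_const q] dist_a] by (simp add: d_def)
  qed
qed

lemma orthogonal_complement_nontrivial:
  fixes N :: "'a::{complex_inner, complete_space} set"
  assumes "closed N" and N: "csubspace N" and "N \<noteq> UNIV"
  obtains z where "z \<noteq> 0" and "\<And>w. w \<in> N \<Longrightarrow> cinner w z = 0"
proof -
  obtain p where "p \<notin> N"
    using \<open>N \<noteq> UNIV\<close> by blast
  obtain q where "q \<in> N" and q: "dist p q = infdist p N"
    using closed_csubspace_attains_infdist[OF assms(1,2)] .
  define z where "z = p - q"
  have "z \<noteq> 0"
    using \<open>p \<notin> N\<close> \<open>q \<in> N\<close> by (auto simp: z_def)
  have z_min: "norm z \<le> norm (z - w)" if "w \<in> N" for w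
  proof -
    have "q + w \<in> N"
      using N \<open>q \<in> N\<close> that by (simp add: csubspace_def)
    then have "infdist p N \<le> dist p (q + w)"
      by (rule infdist_le)
    then show ?thesis
      using q by (simp add: z_def dist_norm algebra_simps)
  qed
  have "cinner w z = 0" if "w \<in> N" for w
  proof (rule ccontr)
    assume "cinner w z \<noteq> 0"
    then have "cinner z w \<noteq> 0" "w \<noteq> 0"
      by (metis cinner_commute complex_cnj_zero, auto)
    define t where "t = cinner z w / complex_of_real ((norm w)\<^sup>2)"
    have "t *\<^sub>C w \<in> N"
      using N that by (simp add: csubspace_def)
    then have "(norm z)\<^sup>2 \<le> (norm z)\<^sup>2 - (cmod (cinner z w))\<^sup>2 / (norm w)\<^sup>2"
      using z_min norm_diff_projection_sq[OF \<open>w \<noteq> 0\<close>, of z]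
      by (metis t_def norm_ge_zero power_mono)
    moreover have "0 < (cmod (cinner z w))\<^sup>2 / (norm w)\<^sup>2"
      using \<open>cinner z w \<noteq> 0\<close> \<open>w \<noteq> 0\<close> by simp
    ultimately show False
      by linarith
  qed
  with \<open>z \<noteq> 0\<close> show thesis
    using that by blast
qed

lemma riesz_representation:
  fixes f :: "'a::{complex_inner, complete_space} \<Rightarrow> complex"
  assumes add: "\<And>x y. f (x + y) = f x + f y" and scale: "\<And>c x. f (c *\<^sub>C x) = c * f x"
    and bound: "\<And>x. cmod (f x) \<le> C * norm x"
  obtains h where "\<And>x. f x = cinner x h"
proof (cases "\<forall>x. f x = 0")
  case True
  then show thesis
    using that[of 0] by simp
next
  case False
  define N where "N = {x. f x = 0}"
  have "bounded_linear f"
  proof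
    show "f (r *\<^sub>R x) = r *\<^sub>R f x" for r x
      using scale[of "complex_of_real r" x] by (simp add: scaleC_of_real scaleR_conv_of_real)
    show "\<exists>K. \<forall>x. norm (f x) \<le> norm x * K"
      using bound by (metis mult.commute)
  qed (rule add)
  then have "closed N"
    unfolding N_def using closed_Collect_eq[OF linear_continuous_on continuous_on_const] by blast
  moreover have "csubspace N"
    unfolding N_def csubspace_def using add scale[of 0 0] scale by auto
  moreover have "N \<noteq> UNIV"
    using False by (auto simp: N_def)
  ultimately obtain z where "z \<noteq> 0" and z: "\<And>w. w \<in> N \<Longrightarrow> cinner w z = 0"
    by (meson orthogonal_complement_nontrivial)
  have "f x = cinner x ((cnj (f z) / complex_of_real ((norm z)\<^sup>2)) *\<^sub>C z)" for x
  proof -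
    have "f (- y) = - f y" for y
      using scale[of "- 1" y] by (simp add: scaleC_minus_left scaleC_one)
    then have "f (f x *\<^sub>C z - f z *\<^sub>C x) = 0"
      using add[of "f x *\<^sub>C z" "- (f z *\<^sub>C x)"] by (simp add: scale)
    then have "cinner (f x *\<^sub>C z - f z *\<^sub>C x) z = 0"
      using z by (simp add: N_def)
    then have "f x * complex_of_real ((norm z)\<^sup>2) = f z * cinner x z"
      by (simp add: cinner_diff_left cinner_scaleC_left cinner_self)
    then show ?thesis
      using \<open>z \<noteq> 0\<close> by (simp add: cinner_scaleC_right field_simps)
  qed
  then show thesis
    by (rule that)
qed

section \<open>Bounded operators, weak convergence and compact operators\<close>

definition clinear :: "('a::complex_normed_vector \<Rightarrow> 'b::complex_normed_vector) \<Rightarrow> bool" where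
  "clinear T \<longleftrightarrow> (\<forall>x y. T (x + y) = T x + T y) \<and> (\<forall>c x. T (c *\<^sub>C x) = c *\<^sub>C T x)"

definition bounded_clinear :: "('a::complex_normed_vector \<Rightarrow> 'b::complex_normed_vector) \<Rightarrow> bool" where
  "bounded_clinear T \<longleftrightarrow> clinear T \<and> (\<exists>C. \<forall>x. norm (T x) \<le> C * norm x)"

lemma clinear_imp_linear: "clinear T \<Longrightarrow> linear T"
  unfolding clinear_def by (intro linearI) (auto simp flip: scaleC_of_real)

lemma linear_norm_le_of_unit_ball:
  assumes "linear T" and "\<And>u. norm u \<le> 1 \<Longrightarrow> norm (T u) \<le> C"
  shows "norm (T x) \<le> C * norm x"
proof (cases "x = 0")
  case True
  then show ?thesis
    using linear_0[OF \<open>linear T\<close>] by simp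
next
  case False
  have "T x = norm x *\<^sub>R T (x /\<^sub>R norm x)"
    using linear_scale[OF \<open>linear T\<close>, of "norm x" "x /\<^sub>R norm x"] False by simp
  then have "norm (T x) = norm x * norm (T (x /\<^sub>R norm x))"
    by simp
  also have "\<dots> \<le> norm x * C"
    using assms(2)[of "x /\<^sub>R norm x"] False by (intro mult_left_mono) simp_all
  finally show ?thesis
    by (simp add: mult.commute)
qed

lemma onorm_le_of_unit_ball:
  assumes "linear T" and bound: "\<And>u. norm u \<le> 1 \<Longrightarrow> norm (T u) \<le> C"
  shows "onorm T \<le> C"
proof (rule onorm_bound)
  show "0 \<le> C"
    using bound[of 0] linear_0[OF \<open>linear T\<close>] by simp
qed (rule linear_norm_le_of_unit_ball[OF assms])

lemma bounded_clinear_adjoint: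
  fixes T :: "'a::{complex_inner, complete_space} \<Rightarrow> 'b::complex_inner"
  assumes "bounded_clinear T"
  obtains h where "\<And>x. cinner (T x) k = cinner x h"
proof -
  obtain C where C: "\<And>x. norm (T x) \<le> C * norm x" and "clinear T"
    using assms by (auto simp: bounded_clinear_def)
  show thesis
  proof (rule riesz_representation)
    show "cinner (T (x + y)) k = cinner (T x) k + cinner (T y) k" for x y
      using \<open>clinear T\<close> by (simp add: clinear_def cinner_add_left)
    show "cinner (T (c *\<^sub>C x)) k = c * cinner (T x) k" for c x
      using \<open>clinear T\<close> by (simp add: clinear_def cinner_scaleC_left)
    show "cmod (cinner (T x) k) \<le> C * norm k * norm x" for x
      using order_trans[OF cmod_cinner_le mult_right_mono[OF C norm_ge_zero]]
      by (simp add: mult_ac)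
  qed (rule that)
qed

lemma tendsto_cinner_left:
  assumes "(x \<longlongrightarrow> l) F"
  shows "((\<lambda>n. cinner (x n) k) \<longlongrightarrow> cinner l k) F"
proof (rule LIM_zero_cancel, rule Lim_null_comparison)
  show "\<forall>\<^sub>F n in F. norm (cinner (x n) k - cinner l k) \<le> norm (x n - l) * norm k"
    by (intro always_eventually allI) (metis cinner_diff_left cmod_cinner_le)
  show "((\<lambda>n. norm (x n - l) * norm k) \<longlongrightarrow> 0) F"
    using tendsto_mult_left_zero[OF tendsto_norm_zero[OF LIM_zero[OF assms]]] .
qed

definition weakly_null :: "(nat \<Rightarrow> 'a::complex_inner) \<Rightarrow> bool" where
  "weakly_null y \<longleftrightarrow> (\<forall>h. (\<lambda>n. cinner (y n) h) \<longlonglongrightarrow> 0)"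

lemma weakly_null_image_limit_eq_0:
  fixes K :: "'a::{complex_inner, complete_space} \<Rightarrow> 'b::complex_inner"
  assumes "bounded_clinear K" and "weakly_null y" and lim: "(\<lambda>n. K (y n)) \<longlonglongrightarrow> l"
  shows "l = 0"
proof -
  obtain h where h: "\<And>x. cinner (K x) l = cinner x h"
    using bounded_clinear_adjoint[OF \<open>bounded_clinear K\<close>, where k = l] by blast
  have "(\<lambda>n. cinner (K (y n)) l) \<longlonglongrightarrow> 0"
    using \<open>weakly_null y\<close> by (simp add: weakly_null_def h)
  moreover have "(\<lambda>n. cinner (K (y n)) l) \<longlonglongrightarrow> cinner l l"
    using lim by (rule tendsto_cinner_left)
  ultimately show "l = 0"
    using LIMSEQ_unique by fastforce
qed

lemma closed_weakly_null_directions: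
  fixes y :: "nat \<Rightarrow> 'a::complex_inner"
  assumes bound: "\<And>n. norm (y n) \<le> M"
  shows "closed {h. (\<lambda>n. cinner (y n) h) \<longlonglongrightarrow> 0}" (is "closed ?W")
proof -
  define M' where "M' = \<bar>M\<bar> + 1"
  have "M' > 0" and bound': "\<And>n. norm (y n) \<le> M'"
    using bound unfolding M'_def by (simp, smt (verit))
  have "h \<in> ?W" if "h \<in> closure ?W" for h
  proof (simp, rule tendstoI)
    fix e :: real
    assume "0 < e"
    then obtain h' where "h' \<in> ?W" and h': "dist h' h < e / (2 * M')"
      using \<open>h \<in> closure ?W\<close> \<open>M' > 0\<close> unfolding closure_approachable by (metis divide_pos_pos mult_pos_pos zero_less_numeral)
    then have "(\<lambda>n. cinner (y n) h') \<longlonglongrightarrow> 0"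
      by simp
    then have "\<forall>\<^sub>F n in sequentially. dist (cinner (y n) h') 0 < e / 2"
      using \<open>0 < e\<close> by (intro tendstoD) simp_all
    then show "\<forall>\<^sub>F n in sequentially. dist (cinner (y n) h) 0 < e"
    proof (rule eventually_mono)
      fix n
      assume close: "dist (cinner (y n) h') 0 < e / 2"
      have "cmod (cinner (y n) (h - h')) \<le> norm (y n) * norm (h - h')"
        by (rule cmod_cinner_le)
      also have "\<dots> \<le> M' * (e / (2 * M'))"
        using bound'[of n] h' \<open>M' > 0\<close>
        by (intro mult_mono) (simp_all add: dist_norm norm_minus_commute)
      also have "\<dots> = e / 2"
        using \<open>M' > 0\<close> by simp
      finally have "cmod (cinner (y n) h - cinner (y n) h') \<le> e / 2"
        by (simp add: cinner_diff_right)
      then show "dist (cinner (y n) h) 0 < e"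
        using close norm_triangle_ineq2[of "cinner (y n) h" "cinner (y n) h'"] by simp
    qed
  qed
  then show ?thesis
    using closure_subset_eq by blast
qed

lemma csubspace_weakly_null_directions:
  "csubspace {h. (\<lambda>n. cinner (y n) h) \<longlonglongrightarrow> 0}" (is "csubspace ?W")
  unfolding csubspace_def
proof (intro conjI ballI allI)
  show "a + b \<in> ?W" if "a \<in> ?W" and "b \<in> ?W" for a b
    using tendsto_add_zero that by (simp add: cinner_add_right)
  show "c *\<^sub>C a \<in> ?W" if "a \<in> ?W" for c a
    using tendsto_mult_right_zero[of _ sequentially "cnj c"] that by (simp add: cinner_scaleC_right)
qed simp

text \<open>The adjoint of an injective operator has dense range; on that range weak convergence to
  zero reduces to the norm convergence of the images.\<close>
lemma weakly_null_if_injective_image_null: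
  fixes Q :: "'a::{complex_inner, complete_space} \<Rightarrow> 'b::complex_inner"
  assumes Q: "bounded_clinear Q" and inj: "\<And>h. Q h = 0 \<Longrightarrow> h = 0"
    and bound: "\<And>n. norm (y n) \<le> M" and lim: "(\<lambda>n. Q (y n)) \<longlonglongrightarrow> 0"
  shows "weakly_null y"
proof -
  define W where "W = {h. (\<lambda>n. cinner (y n) h) \<longlonglongrightarrow> 0}"
  have adjoint_range: "h \<in> W" if h: "\<And>x. cinner (Q x) k = cinner x h" for h k
    using tendsto_cinner_left[OF lim, of k] by (simp add: W_def flip: h)
  have "W = UNIV"
  proof (rule ccontr)
    assume "W \<noteq> UNIV"
    moreover have "closed W"
      unfolding W_def using bound by (rule closed_weakly_null_directions)
    moreover have "csubspace W"
      unfolding W_def by (rule csubspace_weakly_null_directions)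
    ultimately obtain z where "z \<noteq> 0" and z: "\<And>w. w \<in> W \<Longrightarrow> cinner w z = 0"
      by (meson orthogonal_complement_nontrivial)
    obtain h where h: "\<And>x. cinner (Q x) (Q z) = cinner x h"
      using bounded_clinear_adjoint[OF Q, where k = "Q z"] by blast
    have "cinner (Q z) (Q z) = cnj (cinner h z)"
      using h[of z] cinner_commute[of z h] by simp
    also have "\<dots> = 0"
      using z[OF adjoint_range[OF h]] by simp
    finally show False
      using inj \<open>z \<noteq> 0\<close> by simp
  qed
  then show ?thesis
    unfolding weakly_null_def W_def by blast
qed

lemma compact_operator_convergent_subseq:
  fixes y :: "nat \<Rightarrow> 'a::real_normed_vector"
  assumes "compact_operator K" and "\<And>n. norm (y n) \<le> M"
  obtains r l where "strict_mono r" and "(\<lambda>n. K (y (r n))) \<longlonglongrightarrow> l"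
proof -
  have "seq_compact (closure (K ` cball 0 M))"
    using \<open>compact_operator K\<close> by (simp add: compact_operator_def compact_imp_seq_compact)
  moreover have "\<forall>n. (K \<circ> y) n \<in> closure (K ` cball 0 M)"
    using assms(2) closure_subset by fastforce
  ultimately obtain l r where "strict_mono r" and "((K \<circ> y) \<circ> r) \<longlonglongrightarrow> l"
    by (meson seq_compactE)
  then show thesis
    using that by (simp add: comp_def)
qed

lemma compact_operator_imp_bounded_clinear:
  assumes "clinear K" and "compact_operator K"
  shows "bounded_clinear K"
proof -
  have "compact (closure (K ` cball 0 1))"
    using \<open>compact_operator K\<close> by (simp add: compact_operator_def)
  then have "bounded (K ` cball 0 1)"
    using bounded_subset[OF compact_imp_bounded closure_subset] by blast
  then obtain C where "\<forall>z \<in> K ` cball 0 1. norm z \<le> C"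
    unfolding bounded_iff by blast
  then have C: "\<And>u. norm u \<le> 1 \<Longrightarrow> norm (K u) \<le> C"
    by simp
  then have "norm (K x) \<le> C * norm x" for x
    using \<open>clinear K\<close> by (intro linear_norm_le_of_unit_ball clinear_imp_linear)
  with \<open>clinear K\<close> show ?thesis
    by (auto simp: bounded_clinear_def)
qed

text \<open>A subsequence bounded away from zero would have, by compactness, a further subsequence
  with a nonzero limit; but it is weakly null, so its limit is zero.\<close>
lemma compact_operator_tendsto_0_if_injective_image_null:
  fixes K :: "'a::{complex_inner, complete_space} \<Rightarrow> 'b::complex_inner"
    and Q :: "'a \<Rightarrow> 'c::complex_inner"
  assumes "clinear K" and "compact_operator K"
    and Q: "bounded_clinear Q" and inj: "\<And>h. Q h = 0 \<Longrightarrow> h = 0"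
    and bound: "\<And>n. norm (y n) \<le> M" and lim: "(\<lambda>n. Q (y n)) \<longlonglongrightarrow> 0"
  shows "(\<lambda>n. K (y n)) \<longlonglongrightarrow> 0"
proof (rule ccontr)
  assume "\<not> ?thesis"
  then obtain \<epsilon> where "\<epsilon> > 0" and "\<not> (\<forall>\<^sub>F n in sequentially. dist (K (y n)) 0 < \<epsilon>)"
    unfolding tendsto_iff by blast
  then have "\<exists>\<^sub>F n in sequentially. \<epsilon> \<le> norm (K (y n))"
    by (simp add: not_eventually not_less)
  then have "infinite {n. \<epsilon> \<le> norm (K (y n))}"
    by (simp add: frequently_cofinite flip: cofinite_eq_sequentially)
  from infinite_enumerate[OF this]
  obtain r :: "nat \<Rightarrow> nat" where "strict_mono r" and "\<forall>n. r n \<in> {n. \<epsilon> \<le> norm (K (y n))}"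
    by blast
  then have far: "\<And>n. \<epsilon> \<le> norm (K (y (r n)))"
    by simp
  have "norm (y (r n)) \<le> M" for n
    by (rule bound)
  then obtain s l where "strict_mono s" and lim_l: "(\<lambda>n. K (y (r (s n)))) \<longlonglongrightarrow> l"
    using compact_operator_convergent_subseq[OF \<open>compact_operator K\<close>, of "\<lambda>n. y (r n)" M] by blast
  have "strict_mono (r \<circ> s)"
    using \<open>strict_mono r\<close> \<open>strict_mono s\<close> by (rule strict_mono_o)
  then have "(\<lambda>n. Q (y (r (s n)))) \<longlonglongrightarrow> 0"
    using LIMSEQ_subseq_LIMSEQ[OF lim] by (simp add: comp_def)
  with inj bound have "weakly_null (\<lambda>n. y (r (s n)))"
    by (rule weakly_null_if_injective_image_null[OF Q])
  then have "l = 0"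
    using compact_operator_imp_bounded_clinear[OF assms(1,2)] lim_l
    by (intro weakly_null_image_limit_eq_0)
  moreover have "\<epsilon> \<le> norm l"
    using LIMSEQ_le_const[OF tendsto_norm[OF lim_l], of \<epsilon>] far by blast
  ultimately show False
    using \<open>\<epsilon> > 0\<close> by simp
qed

section \<open>Sectors around the negative real axis\<close>

definition sector :: "real \<Rightarrow> complex set" where
  "sector \<gamma> = {\<mu>. \<mu> \<noteq> 0 \<and> \<bar>Arg (- \<mu>)\<bar> \<le> \<gamma>}"

lemma sector_cos_mult_cmod_le:
  assumes "\<mu> \<in> sector \<gamma>" and "\<gamma> \<le> pi"
  shows "cos \<gamma> * cmod \<mu> \<le> - Re \<mu>"
proof -
  have "\<mu> \<noteq> 0"
    using assms(1) by (simp add: sector_def)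
  have "cos \<gamma> \<le> cos \<bar>Arg (- \<mu>)\<bar>"
    using assms by (intro cos_monotone_0_pi_le) (auto simp: sector_def)
  also have "\<dots> = Re (- \<mu>) / cmod (- \<mu>)"
    using cos_Arg[of "- \<mu>"] \<open>\<mu> \<noteq> 0\<close> by simp
  finally show ?thesis
    using \<open>\<mu> \<noteq> 0\<close> by (simp add: field_simps)
qed

lemma Re_neg_if_sector_bound:
  assumes "0 < c" and "c * cmod \<mu> \<le> - Re \<mu>" and "\<mu> \<noteq> 0"
  shows "Re \<mu> < 0"
proof -
  have "0 < c * cmod \<mu>"
    using assms by simp
  then show ?thesis
    using assms(2) by linarith
qed

lemma sector_Re_neg:
  assumes "\<mu> \<in> sector \<gamma>" and "\<gamma> < pi / 2"
  shows "Re \<mu> < 0"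
proof (rule Re_neg_if_sector_bound)
  show "0 < cos \<gamma>"
    using assms by (intro cos_gt_zero_pi) (auto simp: sector_def)
  show "cos \<gamma> * cmod \<mu> \<le> - Re \<mu>"
    using assms by (intro sector_cos_mult_cmod_le) (auto simp: sector_def)
  show "\<mu> \<noteq> 0"
    using assms(1) by (simp add: sector_def)
qed

section \<open>Resolvents of m-dissipative operators\<close>

context
  fixes D :: "'b::complex_inner set" and A :: "'b \<Rightarrow> 'b"
  assumes m_diss: "m_dissipative D (\<lambda>x. - A x)"
begin

lemma m_dissipative_domain_csubspace: "csubspace D"
  using m_diss by (simp add: m_dissipative_def clinear_on_def)

lemma m_dissipative_add:
  assumes "x \<in> D" and "y \<in> D"
  shows "A (x + y) = A x + A y"
proof -
  have "- A (x + y) = - A x + - A y"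
    using m_diss assms by (simp add: m_dissipative_def clinear_on_def)
  then show ?thesis
    by (simp only: minus_add_distrib[symmetric] neg_equal_iff_equal)
qed

lemma m_dissipative_scaleC: "x \<in> D \<Longrightarrow> A (c *\<^sub>C x) = c *\<^sub>C A x"
  using m_diss by (simp add: m_dissipative_def clinear_on_def scaleC_minus_right)

lemma m_dissipative_Re_cinner_nonneg: "x \<in> D \<Longrightarrow> 0 \<le> Re (cinner (A x) x)"
  using m_diss by (simp add: m_dissipative_def dissipative_def cinner_minus_left)

lemma resolvent_ex1:
  assumes "Re \<mu> < 0"
  shows "\<exists>!x. x \<in> D \<and> A x - \<mu> *\<^sub>C x = y"
proof -
  define f where "f = (\<lambda>x. - A x - (- \<mu>) *\<^sub>C x)"
  have bij: "bij_betw f D UNIV"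
    using m_diss assms by (simp add: m_dissipative_def boundedly_invertible_def f_def)
  have f_eq: "f x = - (A x - \<mu> *\<^sub>C x)" for x
    by (simp add: f_def scaleC_minus_left)
  obtain x where "x \<in> D" and "f x = - y"
    using bij_betw_imp_surj_on[OF bij] by (metis UNIV_I imageE)
  then have x: "x \<in> D \<and> A x - \<mu> *\<^sub>C x = y"
    by (simp add: f_eq del: minus_diff_eq)
  have "x' = x" if x': "x' \<in> D \<and> A x' - \<mu> *\<^sub>C x' = y" for x'
  proof (rule inj_onD[OF bij_betw_imp_inj_on[OF bij]])
    show "f x' = f x"
      using x x' by (simp add: f_eq)
  qed (use x x' in simp_all)
  with x show ?thesis
    by (rule ex1I)
qed

lemma
  assumes "Re \<mu> < 0"
  shows resolvent_in_domain: "resolvent D A \<mu> y \<in> D"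
    and resolvent_eq: "A (resolvent D A \<mu> y) - \<mu> *\<^sub>C resolvent D A \<mu> y = y"
proof -
  have "resolvent D A \<mu> y \<in> D \<and> A (resolvent D A \<mu> y) - \<mu> *\<^sub>C resolvent D A \<mu> y = y"
    unfolding resolvent_def by (rule theI'[OF resolvent_ex1[OF assms]])
  then show "resolvent D A \<mu> y \<in> D" and "A (resolvent D A \<mu> y) - \<mu> *\<^sub>C resolvent D A \<mu> y = y"
    by simp_all
qed

lemma resolvent_unique:
  assumes "Re \<mu> < 0" and "x \<in> D" and "A x - \<mu> *\<^sub>C x = y"
  shows "resolvent D A \<mu> y = x"
  unfolding resolvent_def
  using assms(2,3) by (intro the1_equality[OF resolvent_ex1[OF assms(1)]]) simp

lemma clinear_resolvent:
  assumes "Re \<mu> < 0"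
  shows "clinear (resolvent D A \<mu>)"
  unfolding clinear_def
proof (intro conjI allI)
  let ?R = "resolvent D A \<mu>"
  note R_in = resolvent_in_domain[OF assms] and R_eq = resolvent_eq[OF assms]
  note D = m_dissipative_domain_csubspace[unfolded csubspace_def]
  fix x y :: 'b and c :: complex
  have "A (?R x + ?R y) - \<mu> *\<^sub>C (?R x + ?R y) = (A (?R x) - \<mu> *\<^sub>C ?R x) + (A (?R y) - \<mu> *\<^sub>C ?R y)"
    using R_in by (simp add: m_dissipative_add scaleC_add_right)
  also have "\<dots> = x + y"
    by (simp only: R_eq)
  finally show "?R (x + y) = ?R x + ?R y"
    using R_in D by (intro resolvent_unique[OF assms]) simp_all
  have "A (c *\<^sub>C ?R x) - \<mu> *\<^sub>C (c *\<^sub>C ?R x) = c *\<^sub>C (A (?R x) - \<mu> *\<^sub>C ?R x)"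
    using R_in by (simp add: m_dissipative_scaleC scaleC_diff_right scaleC_scaleC mult.commute)
  also have "\<dots> = c *\<^sub>C x"
    by (simp only: R_eq)
  finally show "?R (c *\<^sub>C x) = c *\<^sub>C ?R x"
    using R_in D by (intro resolvent_unique[OF assms]) simp_all
qed

lemma norm_resolvent_le:
  assumes "Re \<mu> < 0"
  shows "norm (resolvent D A \<mu> y) * (- Re \<mu>) \<le> norm y"
proof -
  define x where "x = resolvent D A \<mu> y"
  have "cinner y x = cinner (A x) x - \<mu> * complex_of_real ((norm x)\<^sup>2)"
    using resolvent_eq[OF assms, of y] by (metis x_def cinner_diff_left cinner_scaleC_left cinner_self)
  then have "(- Re \<mu>) * (norm x)\<^sup>2 \<le> Re (cinner y x)"
    using m_dissipative_Re_cinner_nonneg[OF resolvent_in_domain[OF assms]] by (simp add: x_def)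
  also have "\<dots> \<le> norm y * norm x"
    using complex_Re_le_cmod[of "cinner y x"] cmod_cinner_le[of y x] by linarith
  finally have "(norm x * (- Re \<mu>)) * norm x \<le> norm y * norm x"
    by (simp add: power2_eq_square algebra_simps)
  show ?thesis
  proof (cases "x = 0")
    case True
    then show ?thesis
      by (simp add: x_def[symmetric])
  next
    case False
    then have "norm x * (- Re \<mu>) \<le> norm y"
      using mult_right_le_imp_le[OF \<open>(norm x * (- Re \<mu>)) * norm x \<le> norm y * norm x\<close>] by simp
    then show ?thesis
      by (simp add: x_def)
  qed
qed

lemma bounded_clinear_resolvent:
  assumes "Re \<mu> < 0"
  shows "bounded_clinear (resolvent D A \<mu>)"
proof -
  have "0 < - Re \<mu>"
    using assms by simp
  then have "norm (resolvent D A \<mu> y) \<le> norm y / (- Re \<mu>)" for y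
    using norm_resolvent_le[OF assms, of y] by (simp only: pos_le_divide_eq)
  then have "\<forall>y. norm (resolvent D A \<mu> y) \<le> (1 / - Re \<mu>) * norm y"
    by simp
  then show ?thesis
    using clinear_resolvent[OF assms] unfolding bounded_clinear_def by blast
qed

lemma resolvent_eq_0_iff:
  assumes "Re \<mu> < 0"
  shows "resolvent D A \<mu> y = 0 \<longleftrightarrow> y = 0"
proof
  assume "resolvent D A \<mu> y = 0"
  moreover have "A 0 = 0"
    using m_dissipative_scaleC[of 0 0] m_dissipative_domain_csubspace by (simp add: csubspace_def)
  ultimately show "y = 0"
    using resolvent_eq[OF assms, of y] by simp
next
  assume "y = 0"
  then show "resolvent D A \<mu> y = 0"
    using clinear_resolvent[OF assms] clinear_imp_linear linear_0 by blast
qed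

lemma resolvent_identity:
  assumes "Re \<mu> < 0" and "Re \<nu> < 0"
  shows "resolvent D A \<nu> (y + (\<mu> - \<nu>) *\<^sub>C resolvent D A \<mu> y) = resolvent D A \<mu> y"
proof (rule resolvent_unique[OF assms(2) resolvent_in_domain[OF assms(1)]])
  let ?x = "resolvent D A \<mu> y"
  have "A ?x - \<nu> *\<^sub>C ?x = (A ?x - \<mu> *\<^sub>C ?x) + (\<mu> - \<nu>) *\<^sub>C ?x"
    by (simp add: scaleC_diff_left)
  then show "A ?x - \<nu> *\<^sub>C ?x = y + (\<mu> - \<nu>) *\<^sub>C ?x"
    by (simp only: resolvent_eq[OF assms(1)])
qed

lemma clinear_Gop:
  assumes B: "clinear_on D B" and "Re \<mu> < 0"
  shows "clinear (Gop D A B \<mu>)"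
proof -
  note R = clinear_resolvent[OF \<open>Re \<mu> < 0\<close>, unfolded clinear_def]
    and R_in = resolvent_in_domain[OF \<open>Re \<mu> < 0\<close>]
  have "B (resolvent D A \<mu> (x + y)) = B (resolvent D A \<mu> x) + B (resolvent D A \<mu> y)" for x y
    using B R R_in by (simp add: clinear_on_def)
  moreover have "B (resolvent D A \<mu> (c *\<^sub>C x)) = c *\<^sub>C B (resolvent D A \<mu> x)" for c x
    using B R R_in by (simp add: clinear_on_def)
  ultimately show ?thesis
    by (simp add: clinear_def Gop_def)
qed

lemma Gop_resolvent_identity:
  assumes "Re \<mu> < 0" and "Re \<nu> < 0"
  shows "Gop D A B \<mu> y = Gop D A B \<nu> (y + (\<mu> - \<nu>) *\<^sub>C resolvent D A \<mu> y)"
  by (simp add: Gop_def resolvent_identity[OF assms])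

lemma norm_resolvent_sector_le:
  assumes "0 < c" and sector: "c * cmod \<mu> \<le> - Re \<mu>" and "\<mu> \<noteq> 0"
  shows "cmod \<mu> * norm (resolvent D A \<mu> y) \<le> norm y / c"
proof -
  have "Re \<mu> < 0"
    using assms by (rule Re_neg_if_sector_bound)
  have "c * (cmod \<mu> * norm (resolvent D A \<mu> y)) \<le> norm (resolvent D A \<mu> y) * (- Re \<mu>)"
    using mult_right_mono[OF sector norm_ge_zero[of "resolvent D A \<mu> y"]] by (simp add: mult_ac)
  also have "\<dots> \<le> norm y"
    by (rule norm_resolvent_le[OF \<open>Re \<mu> < 0\<close>])
  finally show ?thesis
    using \<open>0 < c\<close> by (simp add: field_simps)
qed

lemma norm_resolvent_shift_le:
  assumes "0 < c" and sector: "c * cmod \<mu> \<le> - Re \<mu>" and "1 \<le> cmod \<mu>"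
  shows "norm (y + (\<mu> - \<nu>) *\<^sub>C resolvent D A \<mu> y) \<le> (1 + (1 + cmod \<nu>) / c) * norm y"
proof -
  let ?R = "resolvent D A \<mu> y"
  have "\<mu> \<noteq> 0"
    using \<open>1 \<le> cmod \<mu>\<close> by auto
  have "cmod (\<mu> - \<nu>) \<le> cmod \<mu> + cmod \<mu> * cmod \<nu>"
    using norm_triangle_ineq4[of \<mu> \<nu>] mult_right_mono[OF \<open>1 \<le> cmod \<mu>\<close>, of "cmod \<nu>"] by simp
  then have "cmod (\<mu> - \<nu>) * norm ?R \<le> (cmod \<mu> + cmod \<mu> * cmod \<nu>) * norm ?R"
    by (rule mult_right_mono) simp
  then have "norm ((\<mu> - \<nu>) *\<^sub>C ?R) \<le> (1 + cmod \<nu>) * (cmod \<mu> * norm ?R)"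
    by (simp add: norm_scaleC algebra_simps)
  also have "\<dots> \<le> (1 + cmod \<nu>) * (norm y / c)"
    using norm_resolvent_sector_le[OF \<open>0 < c\<close> sector \<open>\<mu> \<noteq> 0\<close>] by (intro mult_left_mono) auto
  finally show ?thesis
    using norm_triangle_ineq[of y "(\<mu> - \<nu>) *\<^sub>C ?R"] by (simp add: algebra_simps)
qed

end

lemma Gop_tendsto_0_in_sector:
  fixes D :: "'b::{complex_inner, complete_space} set" and B :: "'b \<Rightarrow> 'a::complex_inner"
  assumes m_diss: "m_dissipative D (\<lambda>x. - A x)" and B: "clinear_on D B"
    and \<mu>0: "Re \<mu>0 < 0" and compact: "compact_operator (Gop D A B \<mu>0)"
    and "0 < c" and sector: "\<And>n. c * cmod (\<mu> n) \<le> - Re (\<mu> n)"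
    and large: "\<And>n. 1 \<le> cmod (\<mu> n)" and unbounded: "filterlim (\<lambda>n. cmod (\<mu> n)) at_top sequentially"
    and x: "\<And>n. norm (x n) \<le> 1"
  shows "(\<lambda>n. Gop D A B (\<mu> n) (x n)) \<longlonglongrightarrow> 0"
proof -
  have nonzero: "\<mu> n \<noteq> 0" for n
    using large[of n] by auto
  have neg: "Re (\<mu> n) < 0" for n
    using \<open>0 < c\<close> sector nonzero by (rule Re_neg_if_sector_bound)
  define r where "r n = resolvent D A (\<mu> n) (x n)" for n
  define y where "y n = x n + (\<mu> n - \<mu>0) *\<^sub>C r n" for n
  have y_bound: "norm (y n) \<le> 1 + (1 + cmod \<mu>0) / c" for n
  proof -
    have "norm (y n) \<le> (1 + (1 + cmod \<mu>0) / c) * norm (x n)"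
      unfolding y_def r_def by (rule norm_resolvent_shift_le[OF m_diss \<open>0 < c\<close> sector large])
    also have "\<dots> \<le> 1 + (1 + cmod \<mu>0) / c"
      using x[of n] \<open>0 < c\<close> by (simp add: mult_left_le)
    finally show ?thesis .
  qed
  have "r \<longlonglongrightarrow> 0"
  proof (rule Lim_null_comparison)
    have "norm (r n) \<le> 1 / c * inverse (cmod (\<mu> n))" for n
    proof -
      have "norm (r n) = (cmod (\<mu> n) * norm (r n)) * inverse (cmod (\<mu> n))"
        using \<open>\<mu> n \<noteq> 0\<close> by simp
      also have "\<dots> \<le> 1 / c * inverse (cmod (\<mu> n))"
        using norm_resolvent_sector_le[OF m_diss \<open>0 < c\<close> sector \<open>\<mu> n \<noteq> 0\<close>, of "x n"] x[of n] \<open>0 < c\<close>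
        by (intro mult_right_mono) (auto simp: r_def divide_right_mono intro: order_trans)
      finally show ?thesis .
    qed
    then show "\<forall>\<^sub>F n in sequentially. norm (r n) \<le> 1 / c * inverse (cmod (\<mu> n))"
      by simp
    show "(\<lambda>n. 1 / c * inverse (cmod (\<mu> n))) \<longlonglongrightarrow> 0"
      using tendsto_mult_right_zero[OF tendsto_inverse_0_at_top[OF unbounded]] .
  qed
  moreover have "resolvent D A \<mu>0 (y n) = r n" for n
    unfolding y_def r_def by (rule resolvent_identity[OF m_diss neg \<mu>0])
  ultimately have "(\<lambda>n. resolvent D A \<mu>0 (y n)) \<longlonglongrightarrow> 0"
    by simp
  with resolvent_eq_0_iff[OF m_diss \<mu>0] y_bound
  have "(\<lambda>n. Gop D A B \<mu>0 (y n)) \<longlonglongrightarrow> 0"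
    by (intro compact_operator_tendsto_0_if_injective_image_null[OF clinear_Gop[OF m_diss B \<mu>0]
          compact bounded_clinear_resolvent[OF m_diss \<mu>0]]) blast+
  moreover have "Gop D A B (\<mu> n) (x n) = Gop D A B \<mu>0 (y n)" for n
    unfolding y_def r_def by (rule Gop_resolvent_identity[OF m_diss neg \<mu>0])
  ultimately show ?thesis
    by simp
qed

lemma uniform_bound_from_sequences:
  fixes G :: "complex \<Rightarrow> 'a::real_normed_vector \<Rightarrow> 'b::real_normed_vector"
  assumes seq: "\<And>\<mu> x. (\<And>n. \<mu> n \<in> S) \<Longrightarrow> (\<And>n. 1 \<le> cmod (\<mu> n))
      \<Longrightarrow> filterlim (\<lambda>n. cmod (\<mu> n)) at_top sequentially \<Longrightarrow> (\<And>n. norm (x n) \<le> 1)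
      \<Longrightarrow> (\<lambda>n. G (\<mu> n) (x n)) \<longlonglongrightarrow> 0"
    and "0 < \<epsilon>"
  obtains R where "\<And>\<mu> x. \<mu> \<in> S \<Longrightarrow> R < cmod \<mu> \<Longrightarrow> norm x \<le> 1 \<Longrightarrow> norm (G \<mu> x) \<le> \<epsilon>"
proof -
  have "\<exists>R. \<forall>\<mu> x. \<mu> \<in> S \<and> R < cmod \<mu> \<and> norm x \<le> 1 \<longrightarrow> norm (G \<mu> x) \<le> \<epsilon>"
  proof (rule ccontr)
    assume "\<not> ?thesis"
    then have "\<forall>n::nat. \<exists>\<mu> x. \<mu> \<in> S \<and> real n + 1 < cmod \<mu> \<and> norm x \<le> 1 \<and> \<epsilon> < norm (G \<mu> x)"
      unfolding not_ex not_all not_imp not_le by blast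
    then obtain \<mu> x where
      \<mu>x: "\<And>n. \<mu> n \<in> S \<and> real n + 1 < cmod (\<mu> n) \<and> norm (x n) \<le> 1 \<and> \<epsilon> < norm (G (\<mu> n) (x n))"
      by metis
    then have "real n \<le> cmod (\<mu> n)" and "1 \<le> cmod (\<mu> n)" for n
      using \<mu>x[of n] by linarith+
    then have "filterlim (\<lambda>n. cmod (\<mu> n)) at_top sequentially"
      by (intro filterlim_at_top_mono[OF filterlim_real_sequentially] always_eventually) auto
    with \<mu>x \<open>\<And>n. 1 \<le> cmod (\<mu> n)\<close> have "(\<lambda>n. G (\<mu> n) (x n)) \<longlonglongrightarrow> 0"
      by (intro seq) auto
    then have "\<forall>\<^sub>F n in sequentially. norm (G (\<mu> n) (x n)) < \<epsilon>"
      using order_tendstoD(2)[OF tendsto_norm_zero \<open>0 < \<epsilon>\<close>] by blast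
    then obtain N where "norm (G (\<mu> N) (x N)) < \<epsilon>"
      by (auto simp: eventually_sequentially)
    with \<mu>x[of N] show False
      by simp
  qed
  then show thesis
    using that by blast
qed

theorem lemma2p3:
  fixes D :: "'b::{complex_inner, complete_space} set"
    and A22 :: "'b \<Rightarrow> 'b"
    and A12 :: "'b \<Rightarrow> 'a::{complex_inner, complete_space}"
  assumes sepP: "separable_space TYPE('a)"
    and sepM: "separable_space TYPE('b)"
    and A12_lin: "clinear_on D A12"
    and mdiss: "m_dissipative D (\<lambda>x. - A22 x)"
    and cpt: "\<exists>\<mu>. Re \<mu> < 0 \<and> compact_operator (Gop D A22 A12 \<mu>)"
    and gamma: "0 \<le> \<gamma>" "\<gamma> < pi / 2"
  shows "\<forall>\<epsilon>>0. \<exists>R. \<forall>\<mu>. \<mu> \<noteq> 0 \<and> \<bar>Arg (- \<mu>)\<bar> \<le> \<gamma> \<and> cmod \<mu> > R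
            \<longrightarrow> onorm (Gop D A22 A12 \<mu>) \<le> \<epsilon>"
proof -
  obtain \<mu>0 where \<mu>0: "Re \<mu>0 < 0" and compact: "compact_operator (Gop D A22 A12 \<mu>0)"
    using cpt by blast
  have "0 < cos \<gamma>"
    using gamma by (intro cos_gt_zero_pi) auto
  have decay: "(\<lambda>n. Gop D A22 A12 (\<mu> n) (x n)) \<longlonglongrightarrow> 0"
    if "\<And>n. \<mu> n \<in> sector \<gamma>" "\<And>n. 1 \<le> cmod (\<mu> n)" "filterlim (\<lambda>n. cmod (\<mu> n)) at_top sequentially"
      and "\<And>n. norm (x n) \<le> 1" for \<mu> x
    using that gamma by (intro Gop_tendsto_0_in_sector[OF mdiss A12_lin \<mu>0 compact \<open>0 < cos \<gamma>\<close>])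
      (auto intro: sector_cos_mult_cmod_le)
  show ?thesis
  proof (intro allI impI)
    fix \<epsilon> :: real
    assume "0 < \<epsilon>"
    obtain R where R: "\<And>\<mu> x. \<mu> \<in> sector \<gamma> \<Longrightarrow> R < cmod \<mu> \<Longrightarrow> norm x \<le> 1
        \<Longrightarrow> norm (Gop D A22 A12 \<mu> x) \<le> \<epsilon>"
      using uniform_bound_from_sequences[where S = "sector \<gamma>" and G = "Gop D A22 A12", OF decay \<open>0 < \<epsilon>\<close>]
      by blast
    have "onorm (Gop D A22 A12 \<mu>) \<le> \<epsilon>" if "\<mu> \<in> sector \<gamma>" and "R < cmod \<mu>" for \<mu>
      using clinear_Gop[OF mdiss A12_lin sector_Re_neg[OF that(1) gamma(2)]] R[OF that]
      by (intro onorm_le_of_unit_ball clinear_imp_linear)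
    then show "\<exists>R. \<forall>\<mu>. \<mu> \<noteq> 0 \<and> \<bar>Arg (- \<mu>)\<bar> \<le> \<gamma> \<and> cmod \<mu> > R \<longrightarrow> onorm (Gop D A22 A12 \<mu>) \<le> \<epsilon>"
      unfolding sector_def by blast
  qed
qed

end
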